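(* Let $\Omega\subset\mathbb{R}^n$ be a bounded domain with smooth boundary and outer unit normal $\nu$, let $\vec f:\Omega\times\mathbb{R}\times[0,\infty)\to\mathbb{R}^{n+1}$ be bounded and continuous, let $T>0$, and let $u\in C^{2,1}(Q_T)$, $Q_T=\Omega\times(0,T)$, be a solution of \[ \begin{aligned} \frac{\partial_t u}{\sqrt{1+|du|^2}}&=\operatorname{div}\Big(\frac{du}{\sqrt{1+|du|^2}}\Big)+\vec f(x,u,t)\cdot\frac{(-du,1)}{\sqrt{1+|du|^2}}, && x\in\Omega,\ 0<t<T,\\ du\cdot\nu\big|_{\partial\Omega}&=0, && 0<t<T,\\ u(x,0)&=u_0(x), && x\in\Omega . \end{aligned} \] Then \[ \sup_{Q_T}|u|\le \Big(\sup_{\Omega\times\mathbb{R}\times[0,T]}|\vec f|\Big)\,T+\sup_{\Omega}|u_0| . \]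
   Context: $C^{2,1}(Q_T)$ denotes functions twice continuously differentiable in $x$ and once in $t$; the solution is understood to be regular enough up to $\partial\Omega$ and $t=0$ for the boundary and initial conditions to hold classically. *)

theory Defs
  imports "HOL-Analysis.Analysis"
begin

definition grad :: "((real^'n) \<Rightarrow> real) \<Rightarrow> (real^'n) \<Rightarrow> (real^'n)" where
  "grad f x = (\<chi> i. frechet_derivative f (at x) (axis i 1))"

definition divergence :: "((real^'n) \<Rightarrow> (real^'n)) \<Rightarrow> (real^'n) \<Rightarrow> real" where
  "divergence F x = (\<Sum>i\<in>UNIV. frechet_derivative F (at x) (axis i 1) $ i)"

fun Ck_on :: "nat \<Rightarrow> ((real^'n) \<Rightarrow> real) \<Rightarrow> (real^'n) set \<Rightarrow> bool" where
  "Ck_on 0 f S = continuous_on S f"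
| "Ck_on (Suc k) f S = (continuous_on S f \<and> (\<forall>x\<in>S. f differentiable (at x)) \<and>
      (\<forall>i. Ck_on k (\<lambda>x. frechet_derivative f (at x) (axis i 1)) S))"

definition smooth_on :: "(real^'n) set \<Rightarrow> ((real^'n) \<Rightarrow> real) \<Rightarrow> bool" where
  "smooth_on S f = (\<forall>k. Ck_on k f S)"

text \<open>Omega has smooth boundary with outer unit normal nu: Omega is the sublevel set
  {rho < 0} of a smooth defining function rho with nonvanishing gradient on {rho = 0}
  (= the boundary), and nu is the normalised gradient of rho there.\<close>
definition smooth_boundary_normal :: "(real^'n) set \<Rightarrow> ((real^'n) \<Rightarrow> (real^'n)) \<Rightarrow> bool" where
  "smooth_boundary_normal \<Omega> \<nu> = (\<exists>\<rho>. smooth_on UNIV \<rho> \<and> \<Omega> = {x. \<rho> x < 0} \<and>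
      (\<forall>x. \<rho> x = 0 \<longrightarrow> grad \<rho> x \<noteq> 0) \<and>
      (\<forall>x\<in>frontier \<Omega>. \<nu> x = grad \<rho> x /\<^sub>R norm (grad \<rho> x)))"

definition dx :: "((real^'n) \<times> real \<Rightarrow> real) \<Rightarrow> (real^'n) \<times> real \<Rightarrow> (real^'n)" where
  "dx u p = grad (\<lambda>y. u (y, snd p)) (fst p)"

definition dt :: "((real^'n) \<times> real \<Rightarrow> real) \<Rightarrow> (real^'n) \<times> real \<Rightarrow> real" where
  "dt u p = deriv (\<lambda>s. u (fst p, s)) (snd p)"

definition C21_on :: "((real^'n) \<times> real) set \<Rightarrow> ((real^'n) \<times> real \<Rightarrow> real) \<Rightarrow> bool" where
  "C21_on Q u = (continuous_on Q u \<and>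
     (\<forall>(x,t)\<in>Q. (\<lambda>y. u (y,t)) differentiable (at x) \<and> (\<lambda>s. u (x,s)) differentiable (at t) \<and>
        (\<forall>i. (\<lambda>y. dx u (y,t) $ i) differentiable (at x))) \<and>
     continuous_on Q (dt u) \<and> continuous_on Q (dx u) \<and>
     (\<forall>i j. continuous_on Q (\<lambda>(x,t). grad (\<lambda>y. dx u (y,t) $ i) x $ j)))"

end

theory Submission
  imports Defs
begin

text \<open>For \<open>\<sigma> = \<plusminus>1\<close> and small \<open>\<delta>, \<epsilon> > 0\<close> consider
  \<open>w = \<sigma> u - (M + \<delta>) t - \<epsilon> \<rho>(x)\<close>, where \<open>M\<close> bounds \<open>|f|\<close> and \<open>\<rho>\<close> is a defining
  function of \<open>\<Omega>\<close> (negative inside, zero on the boundary), and let \<open>(x\<^sub>1, t\<^sub>1)\<close> be a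
  maximum point of \<open>w\<close> on \<open>cl \<Omega> \<times> [0, t]\<close>.
  If \<open>t\<^sub>1 > 0\<close> and \<open>x\<^sub>1 \<in> \<Omega>\<close>, then \<open>\<sigma> u\<^sub>t \<ge> M + \<delta>\<close>, \<open>\<sigma> du = \<epsilon> d\<rho>\<close> and
  \<open>\<sigma> D\<^sup>2u \<le> \<epsilon> D\<^sup>2\<rho>\<close> there. Written in non-divergence form, the curvature term is
  \<open>(I - q q\<^sup>T) : D\<^sup>2u\<close> with \<open>|q| < 1\<close>, a positive semidefinite weight, so the equation gives
  \<open>\<sigma> u\<^sub>t \<le> M + O(\<epsilon>)\<close>: impossible once \<open>\<epsilon>\<close> is small compared with \<open>\<delta>\<close>.
  If \<open>x\<^sub>1 \<in> \<partial>\<Omega>\<close>, the Neumann condition makes the derivative of \<open>w\<close> in the inward direction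
  \<open>-d\<rho>\<close> equal to \<open>\<epsilon> |d\<rho>|\<^sup>2 > 0\<close>, so the maximum cannot lie there either.
  Hence \<open>t\<^sub>1 = 0\<close>, which gives \<open>\<sigma> u \<le> (M + \<delta>) t + sup |u\<^sub>0| + O(\<epsilon>)\<close>;
  now let \<open>\<delta>, \<epsilon> \<rightarrow> 0\<close>.\<close>

definition curvature_flux :: "real^'n \<Rightarrow> real^'n" where
  "curvature_flux p = p /\<^sub>R sqrt (1 + (norm p)\<^sup>2)"

lemma norm_curvature_flux_less_1: "norm (curvature_flux p) < 1"
proof -
  have "norm p < sqrt (1 + (norm p)\<^sup>2)"
    using real_sqrt_less_mono[of "(norm p)\<^sup>2" "1 + (norm p)\<^sup>2"] by simp
  moreover have "sqrt (1 + (norm p)\<^sup>2) > 0" by (simp add: add_pos_nonneg)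
  ultimately show ?thesis by (simp add: curvature_flux_def field_simps)
qed

lemma linear_eq_inner_axis:
  fixes L :: "real^'n \<Rightarrow> real"
  assumes "linear L"
  shows "L h = (\<chi> i. L (axis i 1)) \<bullet> h"
proof -
  have "L h = L (\<Sum>i\<in>UNIV. h$i *\<^sub>R axis i 1)"
    by (metis (no_types, lifting) basis_expansion scalar_mult_eq_scaleR sum.cong)
  also have "\<dots> = (\<Sum>i\<in>UNIV. h$i * L (axis i 1))"
    using assms by (simp add: linear_sum linear_scale)
  also have "\<dots> = (\<chi> i. L (axis i 1)) \<bullet> h"
    by (simp add: inner_vec_def mult.commute)
  finally show ?thesis .
qed

lemma has_derivative_grad:
  fixes f :: "real^'n \<Rightarrow> real"
  assumes "f differentiable (at x)"
  shows "(f has_derivative (\<lambda>h. grad f x \<bullet> h)) (at x)"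
proof -
  have d: "(f has_derivative frechet_derivative f (at x)) (at x)"
    using assms frechet_derivative_works by blast
  then have "frechet_derivative f (at x) = (\<lambda>h. grad f x \<bullet> h)"
    unfolding grad_def using linear_eq_inner_axis has_derivative_linear by blast
  with d show ?thesis by simp
qed

lemma has_derivative_vec_componentwise:
  fixes F :: "'a::real_normed_vector \<Rightarrow> real^'n"
  assumes "\<And>i. ((\<lambda>y. F y $ i) has_derivative (\<lambda>h. F' h $ i)) (at x)"
  shows "(F has_derivative F') (at x)"
  using assms
  by (subst has_derivative_componentwise_within) (auto simp: Basis_vec_def cart_eq_inner_axis)

lemma has_real_derivative_along_line:
  fixes F :: "real^'n \<Rightarrow> real"
  assumes "(F has_derivative (\<lambda>h. g \<bullet> h)) (at (x + s *\<^sub>R w))"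
  shows "((\<lambda>s. F (x + s *\<^sub>R w)) has_real_derivative (g \<bullet> w)) (at s)"
proof -
  have "((\<lambda>s. x + s *\<^sub>R w) has_derivative (\<lambda>h. h *\<^sub>R w)) (at s)"
    by (rule derivative_eq_intros refl)+ simp
  from has_derivative_compose[OF this assms]
  show ?thesis by (simp add: has_field_derivative_def o_def mult.commute[of _ "g \<bullet> w"])
qed

lemma continuous_on_compact_bound:
  fixes f :: "'a::metric_space \<Rightarrow> 'b::real_normed_vector"
  assumes "compact S" "continuous_on S f"
  obtains B where "B > 0" "\<And>x. x \<in> S \<Longrightarrow> norm (f x) \<le> B"
  using compact_imp_bounded[OF compact_continuous_image[OF assms(2,1)]]
  unfolding bounded_pos by auto

lemma DERIV_nonneg_if_max_at_right_end:
  fixes g :: "real \<Rightarrow> real"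
  assumes "(g has_real_derivative l) (at t)" "a < t" "\<And>s. a \<le> s \<Longrightarrow> s \<le> t \<Longrightarrow> g s \<le> g t"
  shows "l \<ge> 0"
proof (rule ccontr)
  assume "\<not> l \<ge> 0"
  from DERIV_neg_dec_left[OF assms(1)] this obtain d
    where d: "d > 0" "\<And>h. h > 0 \<Longrightarrow> h < d \<Longrightarrow> g t < g (t - h)"
    by force
  define h where "h = min (d/2) (t - a)"
  have "h > 0" "h < d" using d assms(2) by (auto simp: h_def)
  then have "g t < g (t - h)" using d by blast
  moreover have "g (t - h) \<le> g t" using assms(3)[of "t - h"] \<open>h > 0\<close> by (auto simp: h_def)
  ultimately show False by simp
qed

lemma DERIV2_nonpos_at_local_max:
  fixes \<phi> \<phi>' :: "real \<Rightarrow> real"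
  assumes "\<eta> > 0"
    and d1: "\<And>s. \<bar>s\<bar> < \<eta> \<Longrightarrow> (\<phi> has_real_derivative \<phi>' s) (at s)"
    and "\<phi>' 0 = 0" and d2: "(\<phi>' has_real_derivative d) (at 0)"
    and max: "\<And>s. \<bar>s\<bar> < \<eta> \<Longrightarrow> \<phi> s \<le> \<phi> 0"
  shows "d \<le> 0"
proof (rule ccontr)
  assume "\<not> d \<le> 0"
  from DERIV_pos_inc_right[OF d2] this obtain e
    where e: "e > 0" "\<And>h. h > 0 \<Longrightarrow> h < e \<Longrightarrow> \<phi>' 0 < \<phi>' h"
    by force
  define h where "h = min e \<eta> / 2"
  have h: "h > 0" "h < e" "h < \<eta>" using e \<open>\<eta> > 0\<close> by (auto simp: h_def)
  have "\<phi> 0 < \<phi> h"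
  proof (rule DERIV_pos_imp_increasing_open[OF \<open>h > 0\<close>])
    show "\<exists>y. (\<phi> has_real_derivative y) (at s) \<and> y > 0" if "0 < s" "s < h" for s
    proof (intro exI conjI)
      show "(\<phi> has_real_derivative \<phi>' s) (at s)" using d1[of s] that h by simp
      show "\<phi>' s > 0" using e(2)[of s] \<open>\<phi>' 0 = 0\<close> that h by simp
    qed
    show "continuous_on {0..h} \<phi>"
    proof (rule DERIV_continuous_on)
      fix s assume "s \<in> {0..h}"
      then have "\<bar>s\<bar> < \<eta>" using h(3) by auto
      then show "(\<phi> has_real_derivative \<phi>' s) (at s within {0..h})"
        using d1 has_field_derivative_at_within by blast
    qed
  qed
  with max[of h] h show False by simp
qed

lemma second_order_conditions_at_interior_max:
  fixes F :: "real^'n \<Rightarrow> real" and D :: "real^'n \<Rightarrow> real^'n" and Hess :: "'n \<Rightarrow> real^'n"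
  assumes "open S" "x \<in> S"
    and max: "\<And>y. y \<in> S \<Longrightarrow> F y \<le> F x"
    and dF: "\<And>y. y \<in> S \<Longrightarrow> (F has_derivative (\<lambda>h. D y \<bullet> h)) (at y)"
    and dD: "\<And>a. ((\<lambda>y. D y $ a) has_derivative (\<lambda>h. Hess a \<bullet> h)) (at x)"
  shows "D x = 0" and "(\<Sum>a\<in>UNIV. \<Sum>b\<in>UNIV. w$a * w$b * Hess a $ b) \<le> 0"
proof -
  have "(\<lambda>h. D x \<bullet> h) = (\<lambda>h. 0)"
    using differential_zero_maxmin[OF assms(2,1) dF[OF assms(2)]] max by blast
  then have "D x \<bullet> D x = 0" by metis
  then show Dx: "D x = 0" by simp
  obtain \<eta> where \<eta>: "\<eta> > 0" "ball x \<eta> \<subseteq> S" using assms(1,2) open_contains_ball by blast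
  define \<eta>' where "\<eta>' = \<eta> / (norm w + 1)"
  have "\<eta>' > 0"
    unfolding \<eta>'_def using \<eta> norm_ge_zero[of w] by (intro divide_pos_pos) linarith+
  have on_line: "x + r *\<^sub>R w \<in> S" if "\<bar>r\<bar> < \<eta>'" for r
  proof -
    have "\<bar>r\<bar> * norm w \<le> \<bar>r\<bar> * (norm w + 1)" by (simp add: mult_left_mono)
    also have "\<dots> < \<eta>"
      using that norm_ge_zero[of w] by (simp add: \<eta>'_def pos_less_divide_eq)
    finally show ?thesis using \<eta> by (auto simp: dist_norm)
  qed
  define v where "v = (\<Sum>a\<in>UNIV. w$a *\<^sub>R Hess a)"
  have dDw: "((\<lambda>y. D y \<bullet> w) has_derivative (\<lambda>h. v \<bullet> h)) (at x)"
  proof -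
    have "((\<lambda>y. \<Sum>a\<in>UNIV. w$a * D y $ a) has_derivative (\<lambda>h. \<Sum>a\<in>UNIV. w$a * (Hess a \<bullet> h))) (at x)"
      by (intro has_derivative_sum has_derivative_mult_right dD)
    moreover have "(\<lambda>y. D y \<bullet> w) = (\<lambda>y. \<Sum>a\<in>UNIV. w$a * D y $ a)"
      by (simp add: inner_vec_def mult.commute)
    moreover have "(\<lambda>h. v \<bullet> h) = (\<lambda>h. \<Sum>a\<in>UNIV. w$a * (Hess a \<bullet> h))"
      by (simp add: v_def inner_sum_left)
    ultimately show ?thesis by simp
  qed
  have "v \<bullet> w \<le> 0"
  proof (rule DERIV2_nonpos_at_local_max[OF \<open>\<eta>' > 0\<close>])
    show "((\<lambda>r. F (x + r *\<^sub>R w)) has_real_derivative D (x + r *\<^sub>R w) \<bullet> w) (at r)"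
      if "\<bar>r\<bar> < \<eta>'" for r
      by (rule has_real_derivative_along_line, rule dF[OF on_line[OF that]])
    show "F (x + r *\<^sub>R w) \<le> F (x + 0 *\<^sub>R w)" if "\<bar>r\<bar> < \<eta>'" for r
      using max[OF on_line[OF that]] by simp
    show "D (x + 0 *\<^sub>R w) \<bullet> w = 0" using Dx by simp
    show "((\<lambda>r. D (x + r *\<^sub>R w) \<bullet> w) has_real_derivative v \<bullet> w) (at 0)"
      by (rule has_real_derivative_along_line) (simp add: dDw)
  qed
  have "v \<bullet> w = (\<Sum>a\<in>UNIV. w$a * (Hess a \<bullet> w))"
    by (simp add: v_def inner_sum_left)
  also have "\<dots> = (\<Sum>a\<in>UNIV. \<Sum>b\<in>UNIV. w$a * w$b * Hess a $ b)"
    by (simp add: inner_vec_def sum_distrib_left mult_ac)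
  finally show "(\<Sum>a\<in>UNIV. \<Sum>b\<in>UNIV. w$a * w$b * Hess a $ b) \<le> 0"
    using \<open>v \<bullet> w \<le> 0\<close> by simp
qed

lemma weighted_trace_rearrange:
  fixes H :: "'n::finite \<Rightarrow> 'n \<Rightarrow> real" and p :: "real^'n"
  assumes "W > 0"
  shows "W * (\<Sum>i\<in>UNIV. H i i / W - (\<Sum>k\<in>UNIV. p $ k * H k i) / W^3 * p $ i)
    = (\<Sum>a\<in>UNIV. \<Sum>b\<in>UNIV. ((if a = b then 1 else 0) - p $ a / W * (p $ b / W)) * H a b)"
proof -
  have lhs: "W * (\<Sum>i\<in>UNIV. H i i / W - (\<Sum>k\<in>UNIV. p $ k * H k i) / W^3 * p $ i)
      = (\<Sum>i\<in>UNIV. H i i) - (\<Sum>i\<in>UNIV. \<Sum>k\<in>UNIV. p $ k * p $ i * H k i) / W^2"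
  proof -
    have "W * (H i i / W - (\<Sum>k\<in>UNIV. p $ k * H k i) / W^3 * p $ i)
        = H i i - (\<Sum>k\<in>UNIV. p $ k * p $ i * H k i) / W^2" for i
    proof -
      have "(\<Sum>k\<in>UNIV. p $ k * H k i) * p $ i = (\<Sum>k\<in>UNIV. p $ k * p $ i * H k i)"
        by (simp add: sum_distrib_right sum_distrib_left mult_ac)
      then show ?thesis
        using \<open>W > 0\<close> by (simp add: power3_eq_cube power2_eq_square field_simps)
    qed
    then have "W * (\<Sum>i\<in>UNIV. H i i / W - (\<Sum>k\<in>UNIV. p $ k * H k i) / W^3 * p $ i)
        = (\<Sum>i\<in>UNIV. H i i - (\<Sum>k\<in>UNIV. p $ k * p $ i * H k i) / W^2)"
      unfolding sum_distrib_left by (rule sum.cong[OF refl])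
    then show ?thesis by (simp add: sum_subtractf sum_divide_distrib)
  qed
  have rhs: "(\<Sum>a\<in>UNIV. \<Sum>b\<in>UNIV. ((if a = b then 1 else 0) - p $ a / W * (p $ b / W)) * H a b)
      = (\<Sum>a\<in>UNIV. H a a) - (\<Sum>a\<in>UNIV. \<Sum>b\<in>UNIV. p $ a * p $ b * H a b) / W^2"
  proof -
    have "(\<Sum>b\<in>UNIV. ((if a = b then 1 else 0) - p $ a / W * (p $ b / W)) * H a b)
        = H a a - (\<Sum>b\<in>UNIV. p $ a * p $ b * H a b) / W^2" for a
    proof -
      have "(\<Sum>b\<in>UNIV. ((if a = b then 1 else 0) - p $ a / W * (p $ b / W)) * H a b)
          = (\<Sum>b\<in>UNIV. (if a = b then H a b else 0)) - (\<Sum>b\<in>UNIV. p $ a * p $ b * H a b / W^2)"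
        unfolding sum_subtractf[symmetric]
        by (rule sum.cong) (auto simp: power2_eq_square field_simps)
      then show ?thesis by (simp add: sum_divide_distrib)
    qed
    then show ?thesis by (simp add: sum_subtractf sum_divide_distrib)
  qed
  have swap: "(\<Sum>i\<in>UNIV. \<Sum>k\<in>UNIV. p $ k * p $ i * H k i)
      = (\<Sum>a\<in>UNIV. \<Sum>b\<in>UNIV. p $ a * p $ b * H a b)"
    by (rule sum.swap)
  show ?thesis unfolding lhs rhs swap by (rule refl)
qed

lemma divergence_curvature_flux:
  fixes P :: "real^'n \<Rightarrow> real^'n"
  assumes dP: "\<And>i. (\<lambda>y. P y $ i) differentiable (at x)"
  shows "sqrt (1 + (norm (P x))\<^sup>2) * divergence (\<lambda>y. curvature_flux (P y)) x
     = (\<Sum>a\<in>UNIV. \<Sum>b\<in>UNIV. ((if a = b then 1 else 0)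
          - curvature_flux (P x) $ a * curvature_flux (P x) $ b) * grad (\<lambda>y. P y $ a) x $ b)"
proof -
  define H where "H a b = grad (\<lambda>y. P y $ a) x $ b" for a b
  define P' where "P' h = (\<chi> k. grad (\<lambda>y. P y $ k) x \<bullet> h)" for h
  have dP': "(P has_derivative P') (at x)"
    unfolding P'_def by (rule has_derivative_vec_componentwise) (simp add: has_derivative_grad[OF dP])
  define S where "S y = sqrt (1 + P y \<bullet> P y)" for y
  define W where "W = S x"
  have "W > 0" by (simp add: W_def S_def add_pos_nonneg)
  have dS: "(S has_derivative (\<lambda>h. (P x \<bullet> P' h) / W)) (at x)"
    unfolding S_def W_def
    by (rule derivative_eq_intros refl dP' | simp add: add_pos_nonneg inner_commute field_simps)+
  have flux_eq: "(\<lambda>y. curvature_flux (P y)) = (\<lambda>y. inverse (S y) *\<^sub>R P y)"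
    by (auto simp: curvature_flux_def S_def power2_norm_eq_inner)
  define F' where "F' h = inverse W *\<^sub>R P' h - ((P x \<bullet> P' h) / W^3) *\<^sub>R P x" for h
  have "S x \<noteq> 0" using \<open>W > 0\<close> by (simp add: W_def)
  have dF: "((\<lambda>y. inverse (S y) *\<^sub>R P y) has_derivative F') (at x)"
    by (rule has_derivative_eq_rhs[OF has_derivative_scaleR[OF
          Deriv.has_derivative_inverse[OF \<open>S x \<noteq> 0\<close> dS] dP']])
      (use \<open>W > 0\<close> in \<open>auto simp: F'_def W_def power3_eq_cube field_simps\<close>)
  have P'_axis: "P' (axis i 1) $ k = H k i" for i k
    by (simp add: P'_def H_def inner_axis)
  have div: "divergence (\<lambda>y. curvature_flux (P y)) x
      = (\<Sum>i\<in>UNIV. H i i / W - (\<Sum>k\<in>UNIV. P x $ k * H k i) / W^3 * P x $ i)"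
    unfolding divergence_def flux_eq frechet_derivative_at[OF dF, symmetric]
    by (simp add: F'_def P'_axis inner_vec_def field_simps)
  have flux_x: "curvature_flux (P x) $ a = P x $ a / W" for a
    by (simp add: curvature_flux_def W_def S_def power2_norm_eq_inner divide_inverse mult.commute)
  have sqrt_eq: "sqrt (1 + (norm (P x))\<^sup>2) = W" by (simp add: W_def S_def power2_norm_eq_inner)
  show ?thesis
    unfolding sqrt_eq div flux_x H_def[symmetric] by (rule weighted_trace_rearrange[OF \<open>W > 0\<close>])
qed

text \<open>\<open>I - q q\<^sup>T = \<Sum>\<^sub>i w\<^sub>i w\<^sub>i\<^sup>T\<close> with \<open>w\<^sub>i = e\<^sub>i - c q\<^sub>i q\<close> and
  \<open>c = 1 / (1 + sqrt (1 - \<bar>q\<bar>\<^sup>2))\<close>, so the trace is a sum of values of the quadratic form of \<open>K\<close>.\<close>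
lemma trace_id_minus_outer_mult_nonpos:
  fixes K :: "'n::finite \<Rightarrow> 'n \<Rightarrow> real" and q :: "real^'n"
  assumes "norm q < 1"
    and nsd: "\<And>w::real^'n. (\<Sum>a\<in>UNIV. \<Sum>b\<in>UNIV. w$a * w$b * K a b) \<le> 0"
  shows "(\<Sum>a\<in>UNIV. \<Sum>b\<in>UNIV. ((if a = b then 1 else 0) - q$a * q$b) * K a b) \<le> 0"
proof -
  define s where "s = (\<Sum>i\<in>UNIV. q$i * q$i)"
  have "s = (norm q)\<^sup>2" by (simp add: s_def power2_norm_eq_inner inner_vec_def)
  then have "0 \<le> s" "s < 1" using assms(1) by (simp_all add: abs_square_less_1)
  define r where "r = sqrt (1 - s)"
  have "r \<ge> 0" "s = 1 - r * r" using \<open>s < 1\<close> by (simp_all add: r_def)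
  define c where "c = 1 / (1 + r)"
  have c_r: "c * (1 + r) = 1" using \<open>r \<ge> 0\<close> by (simp add: c_def)
  have "2 * c - c * c * s = 2 * c - c * (1 - r) * (c * (1 + r))"
    by (simp add: \<open>s = 1 - r * r\<close> algebra_simps)
  also have "\<dots> = c * (1 + r)" using c_r by (simp add: algebra_simps)
  finally have c: "2 * c - c * c * s = 1" using c_r by simp
  define w where "w i = (\<chi> a. (if a = i then 1 else 0) - c * q$i * q$a)" for i
  have w: "(\<Sum>i\<in>UNIV. w i $ a * w i $ b) = (if a = b then 1 else 0) - q$a * q$b" for a b
  proof -
    have "(\<Sum>i\<in>UNIV. w i $ a * w i $ b) = (\<Sum>i\<in>UNIV. (if a = i \<and> b = i then 1 else 0)
          - c * q$a * (if i = b then q$i else 0) - c * q$b * (if i = a then q$i else 0)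
          + c * c * q$a * q$b * (q$i * q$i))"
      by (rule sum.cong) (auto simp: w_def algebra_simps)
    moreover have "(\<Sum>i\<in>UNIV. if a = i \<and> b = i then 1 else (0::real)) = (if a = b then 1 else 0)"
      by (cases "a = b") (auto intro: sum.neutral)
    ultimately have "(\<Sum>i\<in>UNIV. w i $ a * w i $ b)
        = (if a = b then 1 else 0) - 2 * c * q$a * q$b + c * c * q$a * q$b * s"
      by (simp add: sum.distrib sum_subtractf sum_distrib_left[symmetric] s_def)
    also have "\<dots> = (if a = b then 1 else 0) - q$a * q$b * (2 * c - c * c * s)"
      by (simp add: algebra_simps)
    finally show ?thesis using c by simp
  qed
  have "(\<Sum>a\<in>UNIV. \<Sum>b\<in>UNIV. ((if a = b then 1 else 0) - q$a * q$b) * K a b)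
      = (\<Sum>a\<in>UNIV. \<Sum>b\<in>UNIV. \<Sum>i\<in>UNIV. w i $ a * w i $ b * K a b)"
    by (simp add: w[symmetric] sum_distrib_right)
  also have "\<dots> = (\<Sum>a\<in>UNIV. \<Sum>i\<in>UNIV. \<Sum>b\<in>UNIV. w i $ a * w i $ b * K a b)"
    by (rule sum.cong[OF refl], rule sum.swap)
  also have "\<dots> = (\<Sum>i\<in>UNIV. \<Sum>a\<in>UNIV. \<Sum>b\<in>UNIV. w i $ a * w i $ b * K a b)"
    by (rule sum.swap)
  also have "\<dots> \<le> 0" by (rule sum_nonpos) (rule nsd)
  finally show ?thesis .
qed

lemma double_sum_mult_le:
  fixes A B :: "'n::finite \<Rightarrow> 'n \<Rightarrow> real"
  assumes "\<And>a b. \<bar>A a b\<bar> \<le> \<alpha>" "\<And>a b. \<bar>B a b\<bar> \<le> \<beta>"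
  shows "(\<Sum>a\<in>UNIV. \<Sum>b\<in>UNIV. A a b * B a b) \<le> \<alpha> * \<beta> * CARD('n)\<^sup>2"
proof -
  have "0 \<le> \<alpha>" using assms(1) abs_ge_zero order_trans by blast
  then have "\<bar>A a b\<bar> * \<bar>B a b\<bar> \<le> \<alpha> * \<beta>" for a b by (intro mult_mono assms) auto
  then have "A a b * B a b \<le> \<alpha> * \<beta>" for a b by (metis abs_ge_self abs_mult order_trans)
  then have "(\<Sum>a\<in>UNIV. \<Sum>b\<in>UNIV. A a b * B a b) \<le> (\<Sum>a\<in>(UNIV::'n set). \<Sum>b\<in>(UNIV::'n set). \<alpha> * \<beta>)"
    by (intro sum_mono)
  then show ?thesis by (simp add: power2_eq_square mult_ac)
qed

lemma mult_le_abs_of_abs_eq_1: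
  fixes \<sigma> a :: real
  assumes "\<bar>\<sigma>\<bar> = 1"
  shows "\<sigma> * a \<le> \<bar>a\<bar>"
  using abs_ge_self[of "\<sigma> * a"] assms by (simp add: abs_mult)

lemma curvature_term_le:
  fixes P :: "real^'n \<Rightarrow> real^'n" and R :: "'n \<Rightarrow> 'n \<Rightarrow> real"
  assumes "\<epsilon> \<ge> 0"
    and dP: "\<And>i. (\<lambda>y. P y $ i) differentiable (at x)"
    and nsd: "\<And>w::real^'n.
      (\<Sum>a\<in>UNIV. \<Sum>b\<in>UNIV. w$a * w$b * (\<sigma> * grad (\<lambda>y. P y $ a) x $ b - \<epsilon> * R a b)) \<le> 0"
    and R: "\<And>a b. \<bar>R a b\<bar> \<le> C"
  shows "\<sigma> * (sqrt (1 + (norm (P x))\<^sup>2) * divergence (\<lambda>y. curvature_flux (P y)) x)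
    \<le> \<epsilon> * (2 * C * CARD('n)\<^sup>2)"
proof -
  define q where "q = curvature_flux (P x)"
  define A where "A a b = (if a = b then 1 else 0) - q$a * q$b" for a b
  define H where "H a b = grad (\<lambda>y. P y $ a) x $ b" for a b
  have "\<bar>A a b\<bar> \<le> 2" for a b
  proof -
    have "\<bar>q$a\<bar> \<le> 1" "\<bar>q$b\<bar> \<le> 1"
      using component_le_norm_cart[of q] norm_curvature_flux_less_1[of "P x"]
      unfolding q_def by (meson less_imp_le order_trans)+
    then have "\<bar>q$a * q$b\<bar> \<le> 1" by (simp add: abs_mult mult_le_one)
    then show ?thesis by (auto simp: A_def abs_le_iff)
  qed
  then have bound: "(\<Sum>a\<in>UNIV. \<Sum>b\<in>UNIV. A a b * R a b) \<le> 2 * C * CARD('n)\<^sup>2"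
    using R by (rule double_sum_mult_le)
  have trace: "(\<Sum>a\<in>UNIV. \<Sum>b\<in>UNIV. A a b * (\<sigma> * H a b - \<epsilon> * R a b)) \<le> 0"
    unfolding A_def q_def H_def
    by (rule trace_id_minus_outer_mult_nonpos[OF norm_curvature_flux_less_1 nsd])
  have "\<sigma> * (sqrt (1 + (norm (P x))\<^sup>2) * divergence (\<lambda>y. curvature_flux (P y)) x)
      = \<sigma> * (\<Sum>a\<in>UNIV. \<Sum>b\<in>UNIV. A a b * H a b)"
    unfolding A_def H_def q_def by (simp only: divergence_curvature_flux[OF dP])
  also have "\<dots> = (\<Sum>a\<in>UNIV. \<Sum>b\<in>UNIV. A a b * (\<sigma> * H a b - \<epsilon> * R a b))
        + \<epsilon> * (\<Sum>a\<in>UNIV. \<Sum>b\<in>UNIV. A a b * R a b)"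
    by (simp add: right_diff_distrib sum_subtractf sum_distrib_left mult_ac)
  also have "\<dots> \<le> 0 + \<epsilon> * (2 * C * CARD('n)\<^sup>2)"
    by (intro add_mono mult_left_mono trace bound \<open>\<epsilon> \<ge> 0\<close>)
  finally show ?thesis by simp
qed

lemma inward_segment_in_sublevel:
  fixes \<rho> :: "real^'n \<Rightarrow> real"
  assumes "\<rho> differentiable (at x)" "\<rho> x = 0" "grad \<rho> x \<noteq> 0"
  obtains d where "d > 0" "\<And>r. 0 < r \<Longrightarrow> r < d \<Longrightarrow> \<rho> (x - r *\<^sub>R grad \<rho> x) < 0"
proof -
  have deriv: "((\<lambda>r. \<rho> (x + r *\<^sub>R (- grad \<rho> x))) has_real_derivative grad \<rho> x \<bullet> (- grad \<rho> x))
      (at 0)"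
    by (rule has_real_derivative_along_line) (simp add: has_derivative_grad[OF assms(1)])
  have "grad \<rho> x \<bullet> (- grad \<rho> x) < 0" using assms(3) by simp
  from DERIV_neg_dec_right[OF deriv this] obtain d where "d > 0"
    and d: "\<forall>h>0. h < d \<longrightarrow> \<rho> (x + (0 + h) *\<^sub>R (- grad \<rho> x)) < \<rho> (x + 0 *\<^sub>R (- grad \<rho> x))"
    by blast
  show ?thesis
    by (rule that[OF \<open>d > 0\<close>]) (use d assms(2) in simp)
qed

lemma forcing_term_le:
  fixes v :: "(real^'n) \<times> real" and p :: "real^'n"
  assumes "\<bar>\<sigma>\<bar> = 1" and v: "norm v \<le> M" and p: "norm p \<le> r"
  shows "\<sigma> * (v \<bullet> (- p, 1)) \<le> M * (1 + r)"
proof -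
  have "\<sigma> * (v \<bullet> (- p, 1)) \<le> \<bar>v \<bullet> (- p, 1)\<bar>" by (rule mult_le_abs_of_abs_eq_1[OF assms(1)])
  also have "\<dots> \<le> norm v * sqrt (1 + (norm p)\<^sup>2)"
    using Cauchy_Schwarz_ineq2[of v "(- p, 1)"] by (simp add: norm_Pair add.commute)
  also have "\<dots> \<le> M * (1 + r)"
  proof (rule mult_mono[OF v])
    have "sqrt (1 + (norm p)\<^sup>2) \<le> sqrt ((1 + norm p)\<^sup>2)"
      by (rule real_sqrt_le_mono) (use norm_ge_zero[of p] in \<open>simp add: power2_eq_square algebra_simps\<close>)
    then show "sqrt (1 + (norm p)\<^sup>2) \<le> 1 + r" using p by simp
    show "0 \<le> M" by (rule order_trans[OF norm_ge_zero v])
  qed simp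
  finally show ?thesis .
qed

lemma continuous_on_positive_near:
  fixes \<Phi> :: "'a::metric_space \<Rightarrow> real"
  assumes "continuous_on S \<Phi>" "x \<in> S" "\<Phi> x > 0"
  obtains d where "d > 0" "\<And>y. y \<in> S \<Longrightarrow> dist y x < d \<Longrightarrow> \<Phi> y > 0"
proof -
  obtain d where "d > 0" and d: "\<forall>y\<in>S. dist y x < d \<longrightarrow> dist (\<Phi> y) (\<Phi> x) < \<Phi> x"
    using continuous_on_iff[THEN iffD1, rule_format, OF assms] by blast
  show ?thesis by (rule that[OF \<open>d > 0\<close>]) (use d in \<open>auto simp: dist_real_def abs_less_iff\<close>)
qed

lemma continuous_on_slice:
  assumes "continuous_on (A \<times> B) u" "s \<in> B"
  shows "continuous_on A (\<lambda>x. u (x, s))"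
  by (rule continuous_on_compose2[OF assms(1)]) (auto intro!: continuous_intros simp: assms(2))

locale graphical_mcf_neumann =
  fixes \<Omega> :: "(real^'n) set" and \<rho> :: "real^'n \<Rightarrow> real" and \<nu> :: "real^'n \<Rightarrow> real^'n"
    and u :: "(real^'n) \<times> real \<Rightarrow> real" and Du :: "(real^'n) \<times> real \<Rightarrow> real^'n"
    and f :: "real^'n \<Rightarrow> real \<Rightarrow> real \<Rightarrow> (real^'n) \<times> real"
    and T M c0 :: real
  assumes bounded_\<Omega>: "bounded \<Omega>"
    and \<Omega>_eq: "\<Omega> = {x. \<rho> x < 0}"
    and \<rho>_C2: "Ck_on 2 \<rho> UNIV"
    and grad_\<rho>_nonzero: "\<And>x. \<rho> x = 0 \<Longrightarrow> grad \<rho> x \<noteq> 0"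
    and \<nu>_eq: "\<And>x. x \<in> frontier \<Omega> \<Longrightarrow> \<nu> x = grad \<rho> x /\<^sub>R norm (grad \<rho> x)"
    and T_pos: "T > 0"
    and reg: "C21_on (\<Omega> \<times> {0<..<T}) u"
    and u_cont: "continuous_on (closure \<Omega> \<times> {0..<T}) u"
    and Du_cont: "continuous_on (closure \<Omega> \<times> {0<..<T}) Du"
    and Du_eq: "\<And>x t. x \<in> \<Omega> \<Longrightarrow> t \<in> {0<..<T} \<Longrightarrow> Du (x,t) = dx u (x,t)"
    and pde: "\<And>x t. x \<in> \<Omega> \<Longrightarrow> t \<in> {0<..<T} \<Longrightarrow>
       dt u (x,t) / sqrt (1 + (norm (dx u (x,t)))\<^sup>2)
       = divergence (\<lambda>y. curvature_flux (dx u (y,t))) x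
         + f x (u (x,t)) t \<bullet> ((- dx u (x,t), 1) /\<^sub>R sqrt (1 + (norm (dx u (x,t)))\<^sup>2))"
    and neumann: "\<And>x t. x \<in> frontier \<Omega> \<Longrightarrow> t \<in> {0<..<T} \<Longrightarrow> Du (x,t) \<bullet> \<nu> x = 0"
    and f_bound: "\<And>x t. x \<in> \<Omega> \<Longrightarrow> t \<in> {0<..<T} \<Longrightarrow> norm (f x (u (x,t)) t) \<le> M"
    and initial_bound: "\<And>x. x \<in> \<Omega> \<Longrightarrow> \<bar>u (x,0)\<bar> \<le> c0"
begin

lemma \<rho>_regularity:
  shows \<rho>_continuous: "continuous_on UNIV \<rho>"
    and \<rho>_differentiable: "\<rho> differentiable (at x)"
    and grad_\<rho>_continuous: "continuous_on UNIV (grad \<rho>)"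
    and grad_\<rho>_component_differentiable: "(\<lambda>y. grad \<rho> y $ i) differentiable (at x)"
    and hessian_\<rho>_continuous: "continuous_on UNIV (\<lambda>x. grad (\<lambda>y. grad \<rho> y $ i) x $ j)"
proof -
  have grad_i: "(\<lambda>y. grad \<rho> y $ i) = (\<lambda>y. frechet_derivative \<rho> (at y) (axis i 1))" for i
    by (simp add: grad_def)
  have C2: "continuous_on UNIV \<rho> \<and> (\<forall>x. \<rho> differentiable (at x)) \<and>
      (\<forall>i. Ck_on 1 (\<lambda>y. grad \<rho> y $ i) UNIV)"
    using \<rho>_C2 by (simp add: numeral_2_eq_2 grad_i)
  then show "continuous_on UNIV \<rho>" "\<rho> differentiable (at x)"
    and "(\<lambda>y. grad \<rho> y $ i) differentiable (at x)" by auto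
  have "continuous_on UNIV (\<lambda>y. \<chi> i. grad \<rho> y $ i)"
    using C2 by (intro continuous_on_vec_lambda) auto
  then show "continuous_on UNIV (grad \<rho>)" by simp
  show "continuous_on UNIV (\<lambda>x. grad (\<lambda>y. grad \<rho> y $ i) x $ j)"
    using C2 by (simp add: grad_def[of "\<lambda>y. grad \<rho> y $ i"])
qed

lemma open_\<Omega>: "open \<Omega>"
  unfolding \<Omega>_eq by (rule open_Collect_less[OF \<rho>_continuous continuous_on_const])

lemma \<rho>_nonpos_on_closure: "x \<in> closure \<Omega> \<Longrightarrow> \<rho> x \<le> 0"
  using continuous_le_on_closure[OF continuous_on_subset[OF \<rho>_continuous], of \<Omega> x 0] \<Omega>_eq
  by auto

lemma \<rho>_bounds:
  obtains R G C where "\<And>x. x \<in> closure \<Omega> \<Longrightarrow> \<bar>\<rho> x\<bar> \<le> R"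
    and "\<And>x. x \<in> closure \<Omega> \<Longrightarrow> norm (grad \<rho> x) \<le> G"
    and "\<And>x a b. x \<in> closure \<Omega> \<Longrightarrow> \<bar>grad (\<lambda>y. grad \<rho> y $ a) x $ b\<bar> \<le> C"
proof -
  have K: "compact (closure \<Omega>)" using bounded_\<Omega> by (simp add: compact_closure)
  obtain R where R: "\<And>x. x \<in> closure \<Omega> \<Longrightarrow> norm (\<rho> x) \<le> R"
    using continuous_on_compact_bound[OF K continuous_on_subset[OF \<rho>_continuous]] by blast
  obtain G where G: "\<And>x. x \<in> closure \<Omega> \<Longrightarrow> norm (grad \<rho> x) \<le> G"
    using continuous_on_compact_bound[OF K continuous_on_subset[OF grad_\<rho>_continuous]] by blast
  have "continuous_on (closure \<Omega>) (\<lambda>x. \<chi> a b. grad (\<lambda>y. grad \<rho> y $ a) x $ b)"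
    by (intro continuous_on_vec_lambda continuous_on_subset[OF hessian_\<rho>_continuous]) auto
  then obtain C where C: "\<And>x. x \<in> closure \<Omega> \<Longrightarrow>
      norm (\<chi> a b. grad (\<lambda>y. grad \<rho> y $ a) x $ b) \<le> C"
    using continuous_on_compact_bound[OF K] by blast
  have Cab: "\<bar>grad (\<lambda>y. grad \<rho> y $ a) x $ b\<bar> \<le> C" if "x \<in> closure \<Omega>" for x a b
    using Finite_Cartesian_Product.norm_nth_le[of "\<chi> b. grad (\<lambda>y. grad \<rho> y $ a) x $ b" b]
      Finite_Cartesian_Product.norm_nth_le[of "\<chi> a b. grad (\<lambda>y. grad \<rho> y $ a) x $ b" a] C[OF that]
    by simp
  show ?thesis by (rule that[of R G C]) (use R G Cab in auto)
qed

lemma initial_bound_on_closure: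
  assumes "x \<in> closure \<Omega>"
  shows "\<bar>u (x,0)\<bar> \<le> c0"
proof (rule continuous_le_on_closure[OF _ assms])
  show "continuous_on (closure \<Omega>) (\<lambda>x. \<bar>u (x,0)\<bar>)"
    using continuous_on_slice[OF u_cont] T_pos by (intro continuous_intros) auto
qed (rule initial_bound)

lemma C21_differentiable:
  assumes "x \<in> \<Omega>" "0 < t" "t < T"
  shows "(\<lambda>y. u (y,t)) differentiable (at x)" and "(\<lambda>s. u (x,s)) differentiable (at t)"
    and "(\<lambda>y. dx u (y,t) $ a) differentiable (at x)"
  using reg assms unfolding C21_on_def by auto

lemma has_derivative_barrier_slice:
  assumes "y \<in> \<Omega>" "0 < t" "t < T"
  shows "((\<lambda>y. \<sigma> * u (y,t) - \<epsilon> * \<rho> y) has_derivative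
      (\<lambda>h. (\<sigma> *\<^sub>R dx u (y,t) - \<epsilon> *\<^sub>R grad \<rho> y) \<bullet> h)) (at y)"
  using has_derivative_grad[OF C21_differentiable(1)[OF assms]] has_derivative_grad[OF \<rho>_differentiable]
  by (auto intro!: derivative_eq_intros simp: dx_def inner_diff_left)

lemma pde_nondivergence:
  assumes "x \<in> \<Omega>" "0 < t" "t < T"
  shows "dt u (x,t) = sqrt (1 + (norm (dx u (x,t)))\<^sup>2) * divergence (\<lambda>y. curvature_flux (dx u (y,t))) x
    + f x (u (x,t)) t \<bullet> (- dx u (x,t), 1)"
proof -
  define W where "W = sqrt (1 + (norm (dx u (x,t)))\<^sup>2)"
  have "W > 0" unfolding W_def by (simp add: add_pos_nonneg)
  moreover have "dt u (x,t) / W = divergence (\<lambda>y. curvature_flux (dx u (y,t))) x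
      + f x (u (x,t)) t \<bullet> ((- dx u (x,t), 1) /\<^sub>R W)"
    unfolding W_def by (rule pde[OF assms(1)]) (use assms(2,3) in simp)
  moreover have "f x (u (x,t)) t \<bullet> ((- dx u (x,t), 1) /\<^sub>R W) = (f x (u (x,t)) t \<bullet> (- dx u (x,t), 1)) / W"
    by (simp only: inner_scaleR_right divide_inverse mult.commute)
  ultimately show ?thesis unfolding W_def[symmetric] by (simp add: field_simps)
qed

lemma interior_max_rate_bound:
  assumes \<sigma>: "\<bar>\<sigma>\<bar> = 1" and "\<epsilon> > 0" and x1: "x1 \<in> \<Omega>" and t1: "0 < t1" "t1 < T"
    and max_x: "\<And>y. y \<in> \<Omega> \<Longrightarrow> \<sigma> * u (y,t1) - \<epsilon> * \<rho> y \<le> \<sigma> * u (x1,t1) - \<epsilon> * \<rho> x1"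
    and max_t: "\<And>s. 0 \<le> s \<Longrightarrow> s \<le> t1 \<Longrightarrow>
      \<sigma> * u (x1,s) - (M + \<delta>) * s \<le> \<sigma> * u (x1,t1) - (M + \<delta>) * t1"
    and G: "norm (grad \<rho> x1) \<le> G"
    and C: "\<And>a b. \<bar>grad (\<lambda>y. grad \<rho> y $ a) x1 $ b\<bar> \<le> C"
  shows "\<delta> \<le> \<epsilon> * (2 * C * CARD('n)\<^sup>2 + M * G)"
proof -
  note ddu = C21_differentiable(3)[OF x1 t1]
  have "M + \<delta> \<le> \<sigma> * dt u (x1,t1)"
  proof -
    have "((\<lambda>s. u (x1,s)) has_real_derivative dt u (x1,t1)) (at t1)"
      using C21_differentiable(2)[OF x1 t1] by (simp add: dt_def DERIV_deriv_iff_real_differentiable)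
    then have "((\<lambda>s. \<sigma> * u (x1,s) - (M + \<delta>) * s) has_real_derivative \<sigma> * dt u (x1,t1) - (M + \<delta>))
        (at t1)"
      by (auto intro!: derivative_eq_intros)
    from DERIV_nonneg_if_max_at_right_end[OF this t1(1) max_t] show ?thesis by simp
  qed
  define p where "p = dx u (x1,t1)"
  define Hess where "Hess a = \<sigma> *\<^sub>R grad (\<lambda>y. dx u (y,t1) $ a) x1 - \<epsilon> *\<^sub>R grad (\<lambda>y. grad \<rho> y $ a) x1"
    for a
  have "((\<lambda>y. (\<sigma> *\<^sub>R dx u (y,t1) - \<epsilon> *\<^sub>R grad \<rho> y) $ a) has_derivative (\<lambda>h. Hess a \<bullet> h)) (at x1)"
    for a
    using has_derivative_grad[OF ddu[of a]] has_derivative_grad[OF grad_\<rho>_component_differentiable]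
    by (auto intro!: derivative_eq_intros simp: Hess_def inner_diff_left)
  note second_order = second_order_conditions_at_interior_max
    [where D = "\<lambda>y. \<sigma> *\<^sub>R dx u (y,t1) - \<epsilon> *\<^sub>R grad \<rho> y" and Hess = Hess,
      OF open_\<Omega> x1 max_x has_derivative_barrier_slice[OF _ t1] this]
  have "norm p \<le> \<epsilon> * G"
  proof -
    have "\<sigma> *\<^sub>R p = \<epsilon> *\<^sub>R grad \<rho> x1" using second_order(1) by (simp add: p_def)
    then have "norm p = \<epsilon> * norm (grad \<rho> x1)"
      using \<sigma> \<open>\<epsilon> > 0\<close> by (metis abs_of_pos mult_1 norm_scaleR)
    with G \<open>\<epsilon> > 0\<close> show ?thesis by (simp add: mult_left_mono)
  qed
  have "\<sigma> * (sqrt (1 + (norm p)\<^sup>2) * divergence (\<lambda>y. curvature_flux (dx u (y,t1))) x1)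
      \<le> \<epsilon> * (2 * C * CARD('n)\<^sup>2)"
    unfolding p_def
    by (rule curvature_term_le[where P = "\<lambda>y. dx u (y,t1)"
          and R = "\<lambda>a b. grad (\<lambda>y. grad \<rho> y $ a) x1 $ b", OF _ ddu _ C])
      (use \<open>\<epsilon> > 0\<close> second_order(2) in \<open>auto simp: Hess_def\<close>)
  moreover have "\<sigma> * (f x1 (u (x1,t1)) t1 \<bullet> (- p, 1)) \<le> M * (1 + \<epsilon> * G)"
    using f_bound[OF x1, of t1] t1 by (intro forcing_term_le[OF \<sigma> _ \<open>norm p \<le> \<epsilon> * G\<close>]) simp
  ultimately show ?thesis
    using \<open>M + \<delta> \<le> \<sigma> * dt u (x1,t1)\<close> pde_nondivergence[OF x1 t1] unfolding p_def
    by (simp add: algebra_simps)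
qed

lemma boundary_max_impossible:
  assumes "\<epsilon> > 0" and x1: "x1 \<in> frontier \<Omega>" and t1: "0 < t1" "t1 < T"
    and max_x: "\<And>y. y \<in> closure \<Omega> \<Longrightarrow> \<sigma> * u (y,t1) - \<epsilon> * \<rho> y \<le> \<sigma> * u (x1,t1) - \<epsilon> * \<rho> x1"
  shows False
proof -
  define g where "g = grad \<rho> x1"
  have x1_cl: "x1 \<in> closure \<Omega>" and "x1 \<notin> \<Omega>"
    using x1 open_\<Omega> by (auto simp: frontier_def interior_open)
  then have "\<rho> x1 = 0" using \<rho>_nonpos_on_closure[OF x1_cl] unfolding \<Omega>_eq by simp
  then have "g \<noteq> 0" by (simp add: g_def grad_\<rho>_nonzero)
  obtain d1 where "d1 > 0" and "\<And>r. 0 < r \<Longrightarrow> r < d1 \<Longrightarrow> \<rho> (x1 - r *\<^sub>R g) < 0"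
    unfolding g_def
    by (rule inward_segment_in_sublevel[OF \<rho>_differentiable \<open>\<rho> x1 = 0\<close> \<open>g \<noteq> 0\<close>[unfolded g_def]])
      blast
  then have inside: "x1 - r *\<^sub>R g \<in> \<Omega>" if "0 < r" "r < d1" for r
    using that by (simp add: \<Omega>_eq)
  have segment: "x1 - r *\<^sub>R g \<in> closure \<Omega>" if "0 \<le> r" "r < d1" for r
    using x1_cl inside[of r] that closure_subset by (cases "r = 0") auto
  define \<Phi> where "\<Phi> r = (\<epsilon> *\<^sub>R grad \<rho> (x1 - r *\<^sub>R g) - \<sigma> *\<^sub>R Du (x1 - r *\<^sub>R g, t1)) \<bullet> g" for r
  have "continuous_on {0..<d1} \<Phi>"
  proof -
    have "continuous_on (closure \<Omega>) (\<lambda>y. (\<epsilon> *\<^sub>R grad \<rho> y - \<sigma> *\<^sub>R Du (y,t1)) \<bullet> g)"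
      using continuous_on_slice[OF Du_cont, of t1] t1
      by (intro continuous_intros continuous_on_subset[OF grad_\<rho>_continuous]) auto
    then show ?thesis
      unfolding \<Phi>_def
      by (rule continuous_on_compose2[where f = "\<lambda>r. x1 - r *\<^sub>R g"])
        (auto intro!: continuous_intros segment)
  qed
  moreover have "0 \<in> {0..<d1}" using \<open>d1 > 0\<close> by simp
  moreover have "\<Phi> 0 > 0"
  proof -
    have "Du (x1,t1) \<bullet> g = 0"
      using neumann[OF x1, of t1] t1 \<nu>_eq[OF x1] \<open>g \<noteq> 0\<close> by (simp add: g_def)
    then show ?thesis using \<open>g \<noteq> 0\<close> \<open>\<epsilon> > 0\<close> by (simp add: \<Phi>_def inner_diff_left g_def)
  qed
  ultimately obtain d2 where "d2 > 0" and \<Phi>_pos: "\<And>r. r \<in> {0..<d1} \<Longrightarrow> dist r 0 < d2 \<Longrightarrow> \<Phi> r > 0"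
    by (rule continuous_on_positive_near) blast
  define h where "h = min d1 d2 / 2"
  have "0 < h" "h < d1" "h < d2" using \<open>d1 > 0\<close> \<open>d2 > 0\<close> by (auto simp: h_def)
  define \<psi> where "\<psi> r = \<sigma> * u (x1 - r *\<^sub>R g, t1) - \<epsilon> * \<rho> (x1 - r *\<^sub>R g)" for r
  have "\<psi> 0 < \<psi> h"
  proof (rule DERIV_pos_imp_increasing_open[OF \<open>0 < h\<close>])
    fix r assume r: "0 < r" "r < h"
    have y: "x1 + r *\<^sub>R (- g) \<in> \<Omega>" using inside[of r] r \<open>h < d1\<close> by simp
    have "(\<psi> has_real_derivative (\<sigma> *\<^sub>R dx u (x1 + r *\<^sub>R (- g),t1) - \<epsilon> *\<^sub>R grad \<rho> (x1 + r *\<^sub>R (- g)))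
        \<bullet> (- g)) (at r)"
      unfolding \<psi>_def using has_real_derivative_along_line[OF has_derivative_barrier_slice[OF y t1]]
      by simp
    moreover have "(\<sigma> *\<^sub>R dx u (x1 + r *\<^sub>R (- g),t1) - \<epsilon> *\<^sub>R grad \<rho> (x1 + r *\<^sub>R (- g))) \<bullet> (- g) = \<Phi> r"
      using Du_eq[OF y, of t1] t1 by (simp add: \<Phi>_def inner_diff_left algebra_simps)
    moreover have "\<Phi> r > 0" using \<Phi>_pos[of r] r \<open>h < d1\<close> \<open>h < d2\<close> by (simp add: dist_real_def)
    ultimately show "\<exists>l. (\<psi> has_real_derivative l) (at r) \<and> l > 0" by auto
  next
    have "continuous_on (closure \<Omega>) (\<lambda>y. \<sigma> * u (y,t1) - \<epsilon> * \<rho> y)"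
      using continuous_on_slice[OF u_cont, of t1] t1
      by (intro continuous_intros continuous_on_subset[OF \<rho>_continuous]) auto
    then show "continuous_on {0..h} \<psi>"
      unfolding \<psi>_def
      by (rule continuous_on_compose2[where f = "\<lambda>r. x1 - r *\<^sub>R g"])
        (use \<open>h < d1\<close> in \<open>auto intro!: continuous_intros segment\<close>)
  qed
  with max_x[OF segment[of h]] \<open>0 < h\<close> \<open>h < d1\<close> show False by (simp add: \<psi>_def)
qed

lemma barrier_at_initial_time:
  assumes "\<bar>\<sigma>\<bar> = 1" "\<epsilon> > 0" "x \<in> closure \<Omega>" "\<bar>\<rho> x\<bar> \<le> R"
  shows "\<sigma> * u (x,0) - \<epsilon> * \<rho> x \<le> c0 + \<epsilon> * R"
proof -
  have "\<sigma> * u (x,0) \<le> c0"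
    using mult_le_abs_of_abs_eq_1[OF assms(1)] initial_bound_on_closure[OF assms(3)] by (rule order_trans)
  moreover have "\<epsilon> * (- \<rho> x) \<le> \<epsilon> * R" using assms(2,4) by (intro mult_left_mono) auto
  ultimately show ?thesis by simp
qed

lemma barrier_bound:
  assumes \<sigma>: "\<bar>\<sigma>\<bar> = 1" and "\<epsilon> > 0"
    and R: "\<And>x. x \<in> closure \<Omega> \<Longrightarrow> \<bar>\<rho> x\<bar> \<le> R"
    and G: "\<And>x. x \<in> closure \<Omega> \<Longrightarrow> norm (grad \<rho> x) \<le> G"
    and C: "\<And>x a b. x \<in> closure \<Omega> \<Longrightarrow> \<bar>grad (\<lambda>y. grad \<rho> y $ a) x $ b\<bar> \<le> C"
    and small: "\<epsilon> * (2 * C * CARD('n)\<^sup>2 + M * G) < \<delta>"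
    and x: "x \<in> closure \<Omega>" and t: "0 \<le> t" "t < T"
  shows "\<sigma> * u (x,t) - (M + \<delta>) * t - \<epsilon> * \<rho> x \<le> c0 + \<epsilon> * R"
proof -
  define V where "V p = \<sigma> * u p - (M + \<delta>) * snd p - \<epsilon> * \<rho> (fst p)" for p
  define K where "K = closure \<Omega> \<times> {0..t}"
  have "compact K" using bounded_\<Omega> by (simp add: K_def compact_Times compact_closure)
  moreover have "continuous_on K V"
  proof -
    have "K \<subseteq> closure \<Omega> \<times> {0..<T}" using t by (auto simp: K_def)
    then show ?thesis unfolding V_def
      by (intro continuous_intros continuous_on_subset[OF u_cont]
          continuous_on_compose2[OF \<rho>_continuous]) auto
  qed
  moreover have "(x,t) \<in> K" using x t by (simp add: K_def)
  ultimately obtain pm where "pm \<in> K" and "\<forall>p\<in>K. V p \<le> V pm"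
    using continuous_attains_sup[of K V] by blast
  then obtain x1 t1 where "(x1,t1) \<in> K" and max: "\<And>p. p \<in> K \<Longrightarrow> V p \<le> V (x1,t1)"
    by (cases pm) blast
  then have x1: "x1 \<in> closure \<Omega>" and t1: "0 \<le> t1" "t1 < T" using t by (auto simp: K_def)
  have max_x: "\<sigma> * u (y,t1) - \<epsilon> * \<rho> y \<le> \<sigma> * u (x1,t1) - \<epsilon> * \<rho> x1" if "y \<in> closure \<Omega>" for y
    using max[of "(y,t1)"] that \<open>(x1,t1) \<in> K\<close> by (simp add: K_def V_def)
  have "V (x1,t1) \<le> c0 + \<epsilon> * R"
  proof (cases "t1 = 0")
    case True
    with barrier_at_initial_time[OF \<sigma> \<open>\<epsilon> > 0\<close> x1 R[OF x1]] show ?thesis by (simp add: V_def)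
  next
    case False
    then have "0 < t1" using t1 by simp
    show ?thesis
    proof (cases "x1 \<in> \<Omega>")
      case True
      have "\<delta> \<le> \<epsilon> * (2 * C * CARD('n)\<^sup>2 + M * G)"
      proof (rule interior_max_rate_bound[OF \<sigma> \<open>\<epsilon> > 0\<close> True \<open>0 < t1\<close> t1(2) _ _ G[OF x1] C[OF x1]])
        show "\<sigma> * u (y,t1) - \<epsilon> * \<rho> y \<le> \<sigma> * u (x1,t1) - \<epsilon> * \<rho> x1" if "y \<in> \<Omega>" for y
          using max_x that closure_subset by blast
        show "\<sigma> * u (x1,s) - (M + \<delta>) * s \<le> \<sigma> * u (x1,t1) - (M + \<delta>) * t1" if "0 \<le> s" "s \<le> t1" for s
          using max[of "(x1,s)"] that x1 \<open>(x1,t1) \<in> K\<close> by (simp add: K_def V_def)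
      qed
      with small show ?thesis by simp
    next
      case False
      with x1 open_\<Omega> have "x1 \<in> frontier \<Omega>" by (simp add: frontier_def interior_open)
      from boundary_max_impossible[OF \<open>\<epsilon> > 0\<close> this \<open>0 < t1\<close> t1(2) max_x] show ?thesis ..
    qed
  qed
  moreover have "V (x,t) \<le> V (x1,t1)" using max \<open>(x,t) \<in> K\<close> by blast
  ultimately show ?thesis by (simp add: V_def)
qed

theorem abs_le_linear_growth:
  assumes x: "x \<in> \<Omega>" and t: "0 < t" "t < T"
  shows "\<bar>u (x,t)\<bar> \<le> M * t + c0"
proof -
  obtain R G C where R: "\<And>x. x \<in> closure \<Omega> \<Longrightarrow> \<bar>\<rho> x\<bar> \<le> R"
    and G: "\<And>x. x \<in> closure \<Omega> \<Longrightarrow> norm (grad \<rho> x) \<le> G"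
    and C: "\<And>x a b. x \<in> closure \<Omega> \<Longrightarrow> \<bar>grad (\<lambda>y. grad \<rho> y $ a) x $ b\<bar> \<le> C"
    by (rule \<rho>_bounds) blast
  have x_cl: "x \<in> closure \<Omega>" using x closure_subset by blast
  have "0 \<le> M" using f_bound[OF x, of t] t by (simp add: order_trans[OF norm_ge_zero])
  moreover have "0 \<le> G" "0 \<le> R" "0 \<le> C"
    using order_trans[OF norm_ge_zero G[OF x_cl]] order_trans[OF abs_ge_zero R[OF x_cl]]
      order_trans[OF abs_ge_zero C[OF x_cl]] by auto
  ultimately have L0: "0 \<le> 2 * C * CARD('n)\<^sup>2 + M * G" by simp
  have bound: "\<sigma> * u (x,t) \<le> M * t + c0 + \<eta>" if \<sigma>: "\<bar>\<sigma>\<bar> = 1" and "\<eta> > 0" for \<sigma> \<eta>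
  proof -
    define L where "L = 2 * C * CARD('n)\<^sup>2 + M * G + R + 1"
    define \<delta> where "\<delta> = \<eta> / (t + 1)"
    define \<epsilon> where "\<epsilon> = \<delta> / L"
    have "L > 0" "\<delta> > 0" using L0 \<open>0 \<le> R\<close> \<open>\<eta> > 0\<close> t by (simp_all add: L_def \<delta>_def)
    then have "\<epsilon> > 0" "\<epsilon> * L = \<delta>" by (simp_all add: \<epsilon>_def)
    moreover have "2 * C * CARD('n)\<^sup>2 + M * G < L" "R \<le> L" using L0 \<open>0 \<le> R\<close> by (simp_all add: L_def)
    ultimately have "\<epsilon> * (2 * C * CARD('n)\<^sup>2 + M * G) < \<delta>" "\<epsilon> * R \<le> \<delta>"
      by (metis mult_strict_left_mono, metis mult_left_mono less_imp_le)
    from barrier_bound[OF \<sigma> \<open>\<epsilon> > 0\<close> R G C this(1) x_cl less_imp_le[OF t(1)] t(2)]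
    have "\<sigma> * u (x,t) \<le> M * t + c0 + \<delta> * t + \<epsilon> * R + \<epsilon> * \<rho> x" by (simp add: algebra_simps)
    moreover have "\<epsilon> * \<rho> x \<le> 0" using \<open>\<epsilon> > 0\<close> x \<Omega>_eq by (simp add: mult_nonneg_nonpos)
    moreover have "\<delta> * t + \<delta> = \<delta> * (t + 1)" by (simp add: algebra_simps)
    moreover have "\<delta> * (t + 1) = \<eta>" using t by (simp add: \<delta>_def)
    ultimately show ?thesis using \<open>\<epsilon> * R \<le> \<delta>\<close> by linarith
  qed
  show ?thesis
  proof (rule field_le_epsilon)
    fix \<eta> :: real assume "\<eta> > 0"
    with bound[of 1 \<eta>] bound[of "-1" \<eta>] show "\<bar>u (x,t)\<bar> \<le> M * t + c0 + \<eta>"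
      by (simp add: abs_le_iff)
  qed
qed

end

lemma norm_le_SUP_norm:
  fixes g :: "'a \<Rightarrow> 'b::real_normed_vector"
  assumes "bounded (g ` S)" "A \<subseteq> S" "x \<in> A"
  shows "norm (g x) \<le> (SUP y\<in>A. norm (g y))"
proof (rule cSUP_upper[OF assms(3)])
  obtain B where "\<And>y. y \<in> S \<Longrightarrow> norm (g y) \<le> B" using assms(1) unfolding bounded_iff by blast
  with assms(2) show "bdd_above ((\<lambda>y. norm (g y)) ` A)" by (intro bdd_aboveI2) auto
qed

lemma bounded_slice_image:
  fixes u :: "'a::heine_borel \<times> 'b::topological_space \<Rightarrow> 'c::real_normed_vector"
  assumes "continuous_on (closure S \<times> B) u" "s \<in> B" "bounded S"
  shows "bounded ((\<lambda>x. u (x, s)) ` S)"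
proof -
  have "compact ((\<lambda>x. u (x, s)) ` closure S)"
    using continuous_on_slice[OF assms(1,2)] assms(3)
    by (intro compact_continuous_image) (auto simp: compact_closure)
  then have "bounded ((\<lambda>x. u (x, s)) ` closure S)" by (rule compact_imp_bounded)
  then show ?thesis by (rule bounded_subset) (intro image_mono closure_subset)
qed

theorem mainTheorem5:
  fixes \<Omega> :: "(real^'n) set" and \<nu> :: "(real^'n) \<Rightarrow> (real^'n)"
    and f :: "(real^'n) \<Rightarrow> real \<Rightarrow> real \<Rightarrow> (real^'n) \<times> real"
    and u :: "(real^'n) \<times> real \<Rightarrow> real" and u0 :: "(real^'n) \<Rightarrow> real"
    and T :: real and Du :: "(real^'n) \<times> real \<Rightarrow> (real^'n)"
  assumes dom: "bounded \<Omega>" "connected \<Omega>" "\<Omega> \<noteq> {}"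
    and bdry: "smooth_boundary_normal \<Omega> \<nu>"
    and f_cont: "continuous_on (\<Omega> \<times> UNIV \<times> {0..}) (\<lambda>(x,z,t). f x z t)"
    and f_bdd: "bounded ((\<lambda>(x,z,t). f x z t) ` (\<Omega> \<times> UNIV \<times> {0..}))"
    and T: "T > 0"
    and reg: "C21_on (\<Omega> \<times> {0<..<T}) u"
    and u_cont: "continuous_on (closure \<Omega> \<times> {0..<T}) u"
    and Du_cont: "continuous_on (closure \<Omega> \<times> {0<..<T}) Du"
    and Du_ext: "\<forall>x\<in>\<Omega>. \<forall>t\<in>{0<..<T}. Du (x,t) = dx u (x,t)"
    and pde: "\<forall>x\<in>\<Omega>. \<forall>t\<in>{0<..<T}.
       dt u (x,t) / sqrt (1 + (norm (dx u (x,t)))\<^sup>2)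
       = divergence (\<lambda>y. dx u (y,t) /\<^sub>R sqrt (1 + (norm (dx u (y,t)))\<^sup>2)) x
         + f x (u (x,t)) t \<bullet> ((- dx u (x,t), 1) /\<^sub>R sqrt (1 + (norm (dx u (x,t)))\<^sup>2))"
    and neumann: "\<forall>x\<in>frontier \<Omega>. \<forall>t\<in>{0<..<T}. Du (x,t) \<bullet> \<nu> x = 0"
    and init: "\<forall>x\<in>\<Omega>. u (x,0) = u0 x"
  shows "\<forall>p\<in>\<Omega> \<times> {0<..<T}.
     \<bar>u p\<bar> \<le> (SUP q\<in>\<Omega> \<times> UNIV \<times> {0..T}. norm (case q of (x,z,t) \<Rightarrow> f x z t)) * T
              + (SUP x\<in>\<Omega>. \<bar>u0 x\<bar>)"
proof -
  obtain \<rho> where \<rho>: "smooth_on UNIV \<rho>" "\<Omega> = {x. \<rho> x < 0}" "\<And>x. \<rho> x = 0 \<Longrightarrow> grad \<rho> x \<noteq> 0"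
    "\<And>x. x \<in> frontier \<Omega> \<Longrightarrow> \<nu> x = grad \<rho> x /\<^sub>R norm (grad \<rho> x)"
    using bdry unfolding smooth_boundary_normal_def by blast
  define M where "M = (SUP q\<in>\<Omega> \<times> UNIV \<times> {0..T}. norm (case q of (x,z,t) \<Rightarrow> f x z t))"
  define c0 where "c0 = (SUP x\<in>\<Omega>. \<bar>u0 x\<bar>)"
  have "u0 ` \<Omega> = (\<lambda>x. u (x,0)) ` \<Omega>" using init by (intro image_cong) auto
  then have "bounded (u0 ` \<Omega>)" using bounded_slice_image[OF u_cont _ dom(1), of 0] T by simp
  interpret graphical_mcf_neumann \<Omega> \<rho> \<nu> u Du f T M c0
  proof
    show "Ck_on 2 \<rho> UNIV" using \<rho>(1) unfolding smooth_on_def by blast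
    have sub: "\<Omega> \<times> UNIV \<times> {0..T} \<subseteq> \<Omega> \<times> UNIV \<times> {0..}" by auto
    show "norm (f x (u (x,t)) t) \<le> M" if "x \<in> \<Omega>" "t \<in> {0<..<T}" for x t
      using norm_le_SUP_norm[OF f_bdd sub, of "(x, u (x,t), t)"] that by (simp add: M_def)
    show "\<bar>u (x,0)\<bar> \<le> c0" if "x \<in> \<Omega>" for x
      using norm_le_SUP_norm[OF \<open>bounded (u0 ` \<Omega>)\<close> order_refl that] init that
      by (simp add: c0_def real_norm_def)
  qed (use assms \<rho> in \<open>auto simp: curvature_flux_def\<close>)
  show ?thesis
    unfolding M_def[symmetric] c0_def[symmetric]
  proof
    fix p assume "p \<in> \<Omega> \<times> {0<..<T}"
    then obtain x t where "p = (x,t)" "x \<in> \<Omega>" "0 < t" "t < T" by auto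
    moreover have "0 \<le> M" using f_bound[of x t] calculation by (simp add: order_trans[OF norm_ge_zero])
    ultimately show "\<bar>u p\<bar> \<le> M * T + c0"
      using abs_le_linear_growth[of x t] mult_left_mono[of t T M] by simp
  qed
qed

end
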